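(* Let $N\ge 2$ be an integer, $\lambda\in[0,\frac{\pi}{2})$, and let $\mathcal{M}=(M_1,M_2,M_3)$ be a measurement scenario with $M_3=\{C_0,C_1\}$, $C_0,C_1\in[0,\pi)$. Then the quantum scenario $(|B(\lambda)\rangle,\mathcal{M})$ is a paradox whenever $\lambda,C_0,C_1,M_1,M_2$ satisfy one of the following conditions: (a) $N=2$ and the parameters describe the standard GHZ paradox, namely $\lambda=0$ and $M_1=M_2=M_3=\{0,\frac{\pi}{2}\}$. (b) $N>2$, $N$ is even, and there exist integers $s,t$ with $s$ even, $t$ odd, $1\le s<N$ and $1\le t\le s-1$, such that $C_0=0$, $\delta(\lambda,C_1)\equiv \frac{\pi}{N}s$, $\beta(\lambda,C_1)\equiv-\frac{\pi}{N}t$; and $M_1=M_2=\{\frac{k\pi}{N}:k=0,\dots,N-1\}$. In particular, if moreover $t=s/2$, then $\lambda=\frac{\pi}{2}-\frac{\pi}{N}t$ and $C_1=\frac{\pi}{2}$. (c) There exist integers $s,t'$ with $s$ even, $1\le s<N$ and $0\le t'\le s/2-1$, such that $C_1=\pi-C_0$, $\delta(\lambda,C_0)\equiv\delta(\lambda,C_1)\equiv\frac{\pi}{N}s$, $\beta(\lambda,C_0)\equiv-\frac{\pi}{N}(t'+\frac12)$, $\beta(\lambda,C_1)\equiv-\frac{\pi}{N}(s-t'-\frac12)$; and $M_1=\{\frac{k\pi}{N}:k=0,\dots,N-1\}$, $M_2=\{\frac{(k+\frac12)\pi}{N}:k=0,\dots,N-1\}$. (d) There exist integers $s,s',t'$ with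 $s,s'$ even, $t'$ odd, $1\le s<s'<N$ and $1\le|t'|\le N-1$, such that $\delta(\lambda,C_0)\equiv\frac{\pi}{N}s$, $\delta(\lambda,C_1)\equiv\frac{\pi}{N}s'$, $\beta(\lambda,C_1)-\beta(\lambda,C_0)\equiv\frac{\pi}{N}t'$; and, letting $t$ be the real number with $0<t<s$ and $\beta(\lambda,C_0)\equiv-\frac{\pi}{N}t$ and setting $\nu:=\lceil t\rceil-t$, we have $M_1=\{\frac{k\pi}{N}:k=0,\dots,N-1\}$ and $M_2=\{\frac{(k+\nu)\pi}{N}:k=0,\dots,N-1\}$.
   Context: Throughout, $\equiv$ denotes equality modulo $2\pi$. For $\varphi\in\mathbb{R}$, the equatorial measurement on a qubit is $E_\varphi=\cos\varphi\, X+\sin\varphi\, Y$, with $+1$ eigenvector $|\varphi\rangle=\frac{1}{\sqrt2}(|0\rangle+e^{i\varphi}|1\rangle)$ and $-1$ eigenvector $|\varphi+\pi\rangle$; outcomes $+1,-1$ are relabelled $0,1$. Measurements are identified with their angles. A measurement scenario $\mathcal{M}=(M_1,M_2,M_3)$ consists of finite sets $M_i\subseteq[0,\pi)$ of measurement angles for qubit $i$; its contexts are the triples $(A,B,C)\in M_1\times M_2\times M_3$. For a three-qubit state $|\psi\rangle$, the event $(A,B,C)\to(a,b,c)$ ($a,b,c\in\{0,1\}$) is impossible if $(\langle A+a\pi|\otimes\langle B+b\pi|\otimes\langle C+c\pi|)|\psi\rangle=0$. The quantum scenario $(|\psi\rangle,\mathcal{M})$ is a paradox if for every assignment $g$ of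 an outcome in $\{0,1\}$ to each measurement of $M_1$, $M_2$, $M_3$ (treated as disjoint sets) there is a context $(A,B,C)$ such that the event $(A,B,C)\to(g(A),g(B),g(C))$ is impossible. For $\lambda\in[0,\frac{\pi}{2})$ let $|v_\lambda\rangle=\cos\frac{\lambda}{2}|0\rangle+\sin\frac{\lambda}{2}|1\rangle$, $|w_\lambda\rangle=\sin\frac{\lambda}{2}|0\rangle+\cos\frac{\lambda}{2}|1\rangle$, and define the interpolant state $|B(\lambda)\rangle=\frac{1}{\sqrt2}(|0\rangle|0\rangle|v_\lambda\rangle+|1\rangle|1\rangle|w_\lambda\rangle)$. Define (modulo $2\pi$) $\beta(\lambda,\varphi)=\varphi-2\arctan\left(\frac{\cos\frac{\lambda}{2}\sin\varphi}{\sin\frac{\lambda}{2}+\cos\frac{\lambda}{2}\cos\varphi}\right)$ and $\delta(\lambda,\varphi)=\beta(\lambda,\varphi+\pi)-\beta(\lambda,\varphi)\equiv\pi-2\arctan(\sin\varphi\tan\lambda)$. *)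

theory Defs
  imports Complex_Main
begin

definition cong2pi :: "real \<Rightarrow> real \<Rightarrow> bool" where
  "cong2pi x y \<longleftrightarrow> (\<exists>k::int. x - y = 2 * pi * of_int k)"

text \<open>Qubit computational basis: False = |0>, True = |1>. Outcomes 0,1 are rendered
  as False, True.\<close>

definition eq_ket :: "real \<Rightarrow> bool \<Rightarrow> complex" where
  "eq_ket \<phi> x = (if x then cis \<phi> else 1) / complex_of_real (sqrt 2)"

text \<open>Eigenvector of E_A for outcome a: |A + a pi>.\<close>
definition outcome_ket :: "real \<Rightarrow> bool \<Rightarrow> bool \<Rightarrow> complex" where
  "outcome_ket A a = eq_ket (A + (if a then pi else 0))"

type_synonym state3 = "bool \<Rightarrow> bool \<Rightarrow> bool \<Rightarrow> complex"

definition event_amplitude :: "state3 \<Rightarrow> real \<Rightarrow> real \<Rightarrow> real \<Rightarrow> bool \<Rightarrow> bool \<Rightarrow> bool \<Rightarrow> complex" where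
  "event_amplitude \<psi> A B C a b c =
     (\<Sum>x\<in>UNIV. \<Sum>y\<in>UNIV. \<Sum>z\<in>UNIV.
        cnj (outcome_ket A a x) * cnj (outcome_ket B b y) * cnj (outcome_ket C c z) * \<psi> x y z)"

definition impossible_event :: "state3 \<Rightarrow> real \<Rightarrow> real \<Rightarrow> real \<Rightarrow> bool \<Rightarrow> bool \<Rightarrow> bool \<Rightarrow> bool" where
  "impossible_event \<psi> A B C a b c \<longleftrightarrow> event_amplitude \<psi> A B C a b c = 0"

definition measurement_scenario :: "real set \<Rightarrow> real set \<Rightarrow> real set \<Rightarrow> bool" where
  "measurement_scenario M1 M2 M3 \<longleftrightarrow>
     finite M1 \<and> finite M2 \<and> finite M3 \<and>
     M1 \<subseteq> {0..<pi} \<and> M2 \<subseteq> {0..<pi} \<and> M3 \<subseteq> {0..<pi}"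

text \<open>Paradox: every outcome assignment (separately on M1, M2, M3, which are treated as
  disjoint) hits an impossible event in some context.\<close>
definition paradox :: "state3 \<Rightarrow> real set \<Rightarrow> real set \<Rightarrow> real set \<Rightarrow> bool" where
  "paradox \<psi> M1 M2 M3 \<longleftrightarrow>
     (\<forall>g1 g2 g3 :: real \<Rightarrow> bool. \<exists>A\<in>M1. \<exists>B\<in>M2. \<exists>C\<in>M3.
        impossible_event \<psi> A B C (g1 A) (g2 B) (g3 C))"

definition v_vec :: "real \<Rightarrow> bool \<Rightarrow> complex" where
  "v_vec lam z = (if z then complex_of_real (sin (lam/2)) else complex_of_real (cos (lam/2)))"

definition w_vec :: "real \<Rightarrow> bool \<Rightarrow> complex" where
  "w_vec lam z = (if z then complex_of_real (cos (lam/2)) else complex_of_real (sin (lam/2)))"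

definition B_state :: "real \<Rightarrow> state3" where
  "B_state lam x y z =
     (if x = y then (if x then w_vec lam z else v_vec lam z) / complex_of_real (sqrt 2) else 0)"

text \<open>When the denominator vanishes (the numerator is then nonzero for
  lambda in [0,pi/2)) the quotient is +-infinity and 2 arctan = +-pi, which is pi modulo 2 pi.\<close>
definition beta :: "real \<Rightarrow> real \<Rightarrow> real" where
  "beta lam \<phi> =
     (let d = sin (lam/2) + cos (lam/2) * cos \<phi> in
      if d = 0 then \<phi> - pi
      else \<phi> - 2 * arctan (cos (lam/2) * sin \<phi> / d))"

definition delta :: "real \<Rightarrow> real \<Rightarrow> real" where
  "delta lam \<phi> = beta lam (\<phi> + pi) - beta lam \<phi>"

definition std_angles :: "nat \<Rightarrow> real \<Rightarrow> real set" where
  "std_angles N \<nu> = {(real k + \<nu>) * pi / real N | k. k < N}"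

end

theory Submission
  imports Defs
begin

(*
  With s = sin (lam/2), c = cos (lam/2) and A' = A + a pi (similarly B', C'), the amplitude of
  (A, B, C) -> (a, b, c) on |B(lam)> is (c + s e^(-iC') + e^(-i(A' + B')) (s + c e^(-iC'))) / 4.
  Since beta lam phi = phi - 2 arg (s + c e^(i phi)), it vanishes once A' + B' = beta lam C' + pi
  modulo 2 pi.

  For the grids M1 = {k pi / N} and M2 = {(k + nu) pi / N}, an outcome assignment on M1 determines
  the set F of integers x such that x pi / N = A' (mod 2 pi) for some A in M1; F is N-antiperiodic
  (x in F iff x + N is not), and likewise G for M2. The outcomes of C0, C1 fix integers T0, T1 with
  beta lam C_i' = (T_i + nu) pi / N, and in each of the cases (a)-(d) the hypotheses on beta and delta
  make T1 - T0 odd. There are then x in F, y in G with x + y in {T0 + N, T1 + N}: otherwise F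
  would be periodic with the odd period T1 - T0 as well as N-antiperiodic. The corresponding
  context is impossible.

  For t = s/2, eliminating e^(i C1) from the phase equations at C1 and C1 + pi gives
  sin lam = cos (pi t / N), and then e^(i C1) = i.
*)

lemma Complex_one_polar: "Complex 1 q = sqrt (1 + q\<^sup>2) * cis (arctan q)"
proof -
  have "sqrt (1 + q\<^sup>2) > 0" by (simp add: add_pos_nonneg)
  then show ?thesis by (simp add: complex_eq_iff cos_arctan sin_arctan)
qed

lemma cis_beta_mult:
  fixes lam \<phi> :: real
  defines "s \<equiv> complex_of_real (sin (lam/2))" and "c \<equiv> complex_of_real (cos (lam/2))"
  shows "cis (beta lam \<phi>) * (s + c * cis \<phi>) = cis \<phi> * (s + c * cis (- \<phi>))"
proof (cases "sin (lam/2) + cos (lam/2) * cos \<phi> = 0")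
  case True
  then have beta: "beta lam \<phi> = \<phi> - pi" by (simp add: beta_def)
  have "s + c * cis \<phi> = \<i> * c * sin \<phi>" "s + c * cis (- \<phi>) = - \<i> * c * sin \<phi>"
    using True by (simp_all add: s_def c_def complex_eq_iff)
  then show ?thesis by (simp add: beta minus_cis'[symmetric])
next
  case False
  define d where "d = sin (lam/2) + cos (lam/2) * cos \<phi>"
  define q where "q = cos (lam/2) * sin \<phi> / d"
  have "d \<noteq> 0" using False by (simp add: d_def)
  then have beta: "beta lam \<phi> = \<phi> - 2 * arctan q" by (simp add: beta_def d_def q_def)
  have "s + c * cis \<phi> = d * Complex 1 q" "s + c * cis (- \<phi>) = d * cnj (Complex 1 q)"
    using \<open>d \<noteq> 0\<close> by (simp_all add: s_def c_def d_def q_def complex_eq_iff)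
  then show ?thesis
    unfolding beta Complex_one_polar by (simp add: cis_cnj cis_mult mult_ac)
qed

lemma cis_mult_beta_eq:
  fixes lam \<phi> :: real
  defines "s \<equiv> complex_of_real (sin (lam/2))" and "c \<equiv> complex_of_real (cos (lam/2))"
  shows "cis \<phi> * (cis (beta lam \<phi>) * c - s) = c - cis (beta lam \<phi>) * s"
proof -
  have "cis \<phi> * cis (- \<phi>) = 1" by (simp add: cis_mult)
  with cis_beta_mult[of lam \<phi>] show ?thesis
    unfolding s_def c_def by algebra
qed

lemma cis_beta_add_pi: "cis (beta lam (C + pi)) = cis (beta lam C) * cis (delta lam C)"
  by (simp add: delta_def cis_mult)

lemma beta_at_zero:
  assumes "0 \<le> lam" "lam < pi"
  shows "beta lam 0 = 0"
proof -
  have "sin (lam/2) \<ge> 0" "cos (lam/2) > 0"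
    using assms by (auto intro!: sin_ge_zero cos_gt_zero_pi)
  then show ?thesis by (simp add: beta_def)
qed

lemma beta_at_pi:
  assumes "0 \<le> lam" "lam < pi/2"
  shows "beta lam pi = pi"
proof -
  have "cos lam > 0" using assms by (auto intro!: cos_gt_zero_pi)
  moreover have "cos lam = (cos (lam/2))\<^sup>2 - (sin (lam/2))\<^sup>2"
    using cos_double[of "lam/2"] by simp
  ultimately have "sin (lam/2) - cos (lam/2) \<noteq> 0" by auto
  then show ?thesis by (simp add: beta_def)
qed

lemma delta_at_zero:
  assumes "0 \<le> lam" "lam < pi/2"
  shows "delta lam 0 = pi"
  using assms by (simp add: delta_def beta_at_zero beta_at_pi)

lemma cis_eq_if_cong2pi:
  assumes "cong2pi x y"
  shows "cis x = cis y"
proof -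
  obtain k :: int where "x = y + 2 * pi * of_int k"
    using assms by (auto simp: cong2pi_def algebra_simps)
  then show ?thesis by (simp add: cis_mult[symmetric])
qed

lemma event_amplitude_B_state:
  fixes lam :: real
  defines "s \<equiv> complex_of_real (sin (lam/2))" and "c \<equiv> complex_of_real (cos (lam/2))"
  shows "event_amplitude (B_state lam) A B C False False False =
    (c + cis (- C) * s + cis (- (A + B)) * (s + cis (- C) * c)) / 4"
proof -
  define r where "r = complex_of_real (sqrt 2)"
  have "r * r = complex_of_real (sqrt 2 * sqrt 2)" by (simp only: r_def of_real_mult)
  then have r4: "r * (r * (r * r)) = 4" by simp
  have "event_amplitude (B_state lam) A B C False False False =
    (c + cis (- C) * s + cis (- A) * cis (- B) * (s + cis (- C) * c)) / (r * (r * (r * r)))"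
    by (simp add: event_amplitude_def outcome_ket_def eq_ket_def B_state_def v_vec_def w_vec_def
        s_def c_def r_def UNIV_bool cis_cnj add_divide_distrib algebra_simps)
  then show ?thesis by (simp add: r4 cis_mult)
qed

lemma impossible_event_B_stateI:
  assumes "cis (A + B) = - cis (beta lam C)"
  shows "impossible_event (B_state lam) A B C False False False"
proof -
  define s where "s = complex_of_real (sin (lam/2))"
  define c where "c = complex_of_real (cos (lam/2))"
  have "cis (A + B) * cis C * (c + cis (- C) * s + cis (- (A + B)) * (s + cis (- C) * c))
      = cis (A + B) * (s + c * cis C) + cis C * (s + c * cis (- C))"
    by (simp add: algebra_simps cis_mult)
  also have "\<dots> = 0"
    using assms cis_beta_mult[of lam C] by (simp add: s_def c_def)
  finally show ?thesis
    by (simp add: impossible_event_def event_amplitude_B_state s_def c_def)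
qed

lemma impossible_event_B_state:
  assumes "cis (A + (if a then pi else 0) + (B + (if b then pi else 0)))
    = - cis (beta lam (C + (if c then pi else 0)))"
  shows "impossible_event (B_state lam) A B C a b c"
  using impossible_event_B_stateI[OF assms]
  by (simp add: impossible_event_def event_amplitude_def outcome_ket_def)

lemma iterated_shift:
  fixes f :: "int \<Rightarrow> bool"
  assumes shift: "\<And>x. f (x + p) = (f x \<noteq> b)"
  shows "f (x + k * p) = (f x \<noteq> (b \<and> odd k))"
proof -
  have nat: "f (y + int n * p) = (f y \<noteq> (b \<and> odd n))" for y n
  proof (induction n arbitrary: y)
    case (Suc n)
    have "f (y + int (Suc n) * p) = f ((y + p) + int n * p)" by (simp add: algebra_simps)
    then show ?case using Suc[of "y + p"] shift[of y] by auto
  qed simp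
  show ?thesis
  proof (cases "k \<ge> 0")
    case True
    then show ?thesis using nat[of x "nat k"] by (simp add: even_nat_iff)
  next
    case False
    then show ?thesis using nat[of "x + k * p" "nat (- k)"] by (auto simp: even_nat_iff)
  qed
qed

lemma antiperiodic_sum_hits:
  fixes f h :: "int \<Rightarrow> bool" and N T T' :: int
  assumes "N > 0"
    and f_anti: "\<And>x. f (x + N) = (\<not> f x)" and h_anti: "\<And>y. h (y + N) = (\<not> h y)"
    and "odd (T' - T)"
  shows "\<exists>x y. f x \<and> h y \<and> (x + y = T \<or> x + y = T')"
proof (rule ccontr)
  assume none: "\<not> ?thesis"
  have h_f: "h (U - x) = (\<not> f x)" if "U = T \<or> U = T'" for U x
  proof (cases "f x")
    case True
    then show ?thesis using none that by force
  next
    case False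
    then have "f (x - N)" using f_anti[of "x - N"] by simp
    then have "\<not> h (U - x + N)" using none that by force
    then show ?thesis using False h_anti by simp
  qed
  have period: "f (x + (T' - T)) = f x" for x
    using h_f[of T' "x + (T' - T)"] h_f[of T x] by simp
  have "f (N * (T' - T)) = f 0"
    using iterated_shift[of f "T' - T" False 0 N] period by simp
  moreover have "f ((T' - T) * N) = (\<not> f 0)"
    using iterated_shift[of f N True 0 "T' - T"] f_anti \<open>odd (T' - T)\<close> by simp
  ultimately show False by (simp add: mult.commute)
qed

lemma cis_of_int_mult_pi: "cis (of_int k * pi) = (if odd k then -1 else 1)"
proof -
  have "cis (of_int k * pi) = cis pi powi k" by (rule cis_power_int[symmetric])
  also have "\<dots> = (if odd k then -1 else 1)" by (simp add: power_int_minus_left)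
  finally show ?thesis .
qed

lemma std_angles_eq_image: "std_angles N \<nu> = (\<lambda>k. (real k + \<nu>) * pi / N) ` {..<N}"
  by (auto simp: std_angles_def)

lemma mod_angle_in_std_angles:
  assumes "N > 0"
  shows "(of_int (x mod int N) + \<nu>) * pi / N \<in> std_angles N \<nu>"
proof -
  have "nat (x mod int N) \<in> {..<N}" using assms by (simp add: nat_less_iff)
  then show ?thesis unfolding std_angles_eq_image using assms by force
qed

lemma cis_mod_angle:
  assumes "N > 0"
  shows "cis ((of_int (x mod int N) + \<nu>) * pi / N + (if odd (x div int N) then pi else 0))
    = cis ((of_int x + \<nu>) * pi / N)"
proof -
  have "real_of_int x = of_int (x div int N * int N + x mod int N)" by simp
  also have "\<dots> = real_of_int (x div int N) * N + real_of_int (x mod int N)"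
    by (simp only: of_int_add of_int_mult of_int_of_nat_eq)
  finally have "(of_int x + \<nu>) * pi / N
      = (of_int (x mod int N) + \<nu>) * pi / N + of_int (x div int N) * pi"
    using assms by (simp add: field_simps)
  then have "cis ((of_int x + \<nu>) * pi / N)
      = cis ((of_int (x mod int N) + \<nu>) * pi / N) * cis (of_int (x div int N) * pi)"
    by (simp add: cis_mult)
  then show ?thesis
    by (simp add: cis_of_int_mult_pi flip: minus_cis)
qed

lemma realised_angles_antiperiodic:
  fixes N :: nat and g :: "real \<Rightarrow> bool"
  assumes "N > 0"
  obtains f :: "int \<Rightarrow> bool"
  where "\<And>x. f (x + int N) = (\<not> f x)"
    and "\<And>x. f x \<Longrightarrow> \<exists>A\<in>std_angles N \<nu>.
      cis (A + (if g A then pi else 0)) = cis ((of_int x + \<nu>) * pi / N)"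
proof -
  define A where "A x = (of_int (x mod int N) + \<nu>) * pi / N" for x
  \<comment> \<open>\<open>f x\<close> iff the grid angle \<open>A x\<close> shifted by its outcome
    is \<open>(x + \<nu>) pi / N\<close> modulo \<open>2 pi\<close>\<close>
  define f where "f x = (g (A x) = odd (x div int N))" for x
  show thesis
  proof (rule that[of f])
    show "f (x + int N) = (\<not> f x)" for x
      using assms by (simp add: f_def A_def)
    show "\<exists>A\<in>std_angles N \<nu>.
        cis (A + (if g A then pi else 0)) = cis ((of_int x + \<nu>) * pi / N)" if "f x" for x
    proof
      show "A x \<in> std_angles N \<nu>"
        unfolding A_def by (rule mod_angle_in_std_angles[OF assms])
      show "cis (A x + (if g (A x) then pi else 0)) = cis ((of_int x + \<nu>) * pi / N)"
        using that cis_mod_angle[OF assms, of x \<nu>] by (simp add: f_def A_def)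
    qed
  qed
qed

lemma paradox_B_state_std_anglesI:
  fixes N :: nat
  assumes "N > 0"
    and targets: "\<And>c0 c1. \<exists>U0 U1 :: int. odd (U1 - U0) \<and>
      cis (beta lam (C0 + (if c0 then pi else 0))) = cis ((of_int U0 + \<nu>) * pi / N) \<and>
      cis (beta lam (C1 + (if c1 then pi else 0))) = cis ((of_int U1 + \<nu>) * pi / N)"
  shows "paradox (B_state lam) (std_angles N 0) (std_angles N \<nu>) {C0, C1}"
  unfolding paradox_def
proof (intro allI)
  fix g1 g2 g3 :: "real \<Rightarrow> bool"
  obtain f where f_anti: "\<And>x. f (x + int N) = (\<not> f x)" and f_realised: "\<And>x. f x \<Longrightarrow>
      \<exists>A\<in>std_angles N 0. cis (A + (if g1 A then pi else 0)) = cis ((of_int x + 0) * pi / N)"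
    using realised_angles_antiperiodic[OF \<open>N > 0\<close>] by blast
  obtain h where h_anti: "\<And>y. h (y + int N) = (\<not> h y)" and h_realised: "\<And>y. h y \<Longrightarrow>
      \<exists>B\<in>std_angles N \<nu>. cis (B + (if g2 B then pi else 0)) = cis ((of_int y + \<nu>) * pi / N)"
    using realised_angles_antiperiodic[OF \<open>N > 0\<close>] by blast
  obtain U0 U1 :: int where "odd (U1 - U0)"
    and U0: "cis (beta lam (C0 + (if g3 C0 then pi else 0))) = cis ((of_int U0 + \<nu>) * pi / N)"
    and U1: "cis (beta lam (C1 + (if g3 C1 then pi else 0))) = cis ((of_int U1 + \<nu>) * pi / N)"
    using targets by blast
  have odd_targets: "odd ((U1 + int N) - (U0 + int N))" using \<open>odd (U1 - U0)\<close> by simp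
  obtain x y where "f x" "h y" and xy: "x + y = U0 + int N \<or> x + y = U1 + int N"
    using antiperiodic_sum_hits[of "int N" f h, OF _ f_anti h_anti odd_targets] \<open>N > 0\<close> by auto
  obtain A B where "A \<in> std_angles N 0" "B \<in> std_angles N \<nu>"
    and A: "cis (A + (if g1 A then pi else 0)) = cis ((of_int x + 0) * pi / N)"
    and B: "cis (B + (if g2 B then pi else 0)) = cis ((of_int y + \<nu>) * pi / N)"
    using f_realised[OF \<open>f x\<close>] h_realised[OF \<open>h y\<close>] by blast
  have impossible: "impossible_event (B_state lam) A B C (g1 A) (g2 B) (g3 C)"
    if "x + y = U + int N"
      and U: "cis (beta lam (C + (if g3 C then pi else 0))) = cis ((of_int U + \<nu>) * pi / N)"
    for C U
  proof (rule impossible_event_B_state)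
    have "cis (A + (if g1 A then pi else 0) + (B + (if g2 B then pi else 0)))
        = cis ((of_int x + 0) * pi / N) * cis ((of_int y + \<nu>) * pi / N)"
      unfolding A[symmetric] B[symmetric] by (rule cis_mult[symmetric])
    also have "\<dots> = cis ((of_int U + \<nu>) * pi / N + pi)"
    proof -
      have "real_of_int (x + y) = real_of_int (U + int N)" using that(1) by (rule arg_cong)
      then have "pi * of_int x + pi * of_int y = pi * of_int U + pi * N"
        by (simp flip: distrib_left)
      then show ?thesis
        unfolding cis_mult
        by (intro arg_cong[where f = cis]) (use \<open>N > 0\<close> in \<open>simp add: field_simps\<close>)
    qed
    also have "\<dots> = - cis (beta lam (C + (if g3 C then pi else 0)))"
      by (simp add: U minus_cis)
    finally show "cis (A + (if g1 A then pi else 0) + (B + (if g2 B then pi else 0)))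
        = - cis (beta lam (C + (if g3 C then pi else 0)))" .
  qed
  show "\<exists>A\<in>std_angles N 0. \<exists>B\<in>std_angles N \<nu>. \<exists>C\<in>{C0, C1}.
      impossible_event (B_state lam) A B C (g1 A) (g2 B) (g3 C)"
    using xy impossible[OF _ U0] impossible[OF _ U1] \<open>A \<in> std_angles N 0\<close>
      \<open>B \<in> std_angles N \<nu>\<close> by blast
qed

lemma cis_beta_outcome:
  assumes "cis (beta lam C) = cis ((of_int T + \<nu>) * pi / N)"
    and "cis (delta lam C) = cis (of_int S * pi / N)"
  shows "cis (beta lam (C + (if c then pi else 0)))
    = cis ((of_int (T + (if c then S else 0)) + \<nu>) * pi / N)"
proof (cases c)
  case True
  have "cis (beta lam (C + pi)) = cis (beta lam C) * cis (delta lam C)"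
    by (rule cis_beta_add_pi)
  also have "\<dots> = cis ((of_int (T + S) + \<nu>) * pi / N)"
    by (simp add: assms cis_mult add_divide_distrib[symmetric] algebra_simps)
  finally show ?thesis using True by simp
qed (use assms in simp)

lemma paradox_B_state_std_angles:
  fixes N :: nat and T T' S S' :: int
  assumes "N > 0"
    and "cis (beta lam C0) = cis ((of_int T + \<nu>) * pi / N)"
    and "cis (delta lam C0) = cis (of_int S * pi / N)"
    and "cis (beta lam C1) = cis ((of_int T' + \<nu>) * pi / N)"
    and "cis (delta lam C1) = cis (of_int S' * pi / N)"
    and "even S" "even S'" "odd (T' - T)"
  shows "paradox (B_state lam) (std_angles N 0) (std_angles N \<nu>) {C0, C1}"
proof (rule paradox_B_state_std_anglesI[OF \<open>N > 0\<close>])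
  fix c0 c1 :: bool
  show "\<exists>U0 U1 :: int. odd (U1 - U0) \<and>
      cis (beta lam (C0 + (if c0 then pi else 0))) = cis ((of_int U0 + \<nu>) * pi / N) \<and>
      cis (beta lam (C1 + (if c1 then pi else 0))) = cis ((of_int U1 + \<nu>) * pi / N)"
    using assms cis_beta_outcome[of lam C0 T \<nu> N S c0] cis_beta_outcome[of lam C1 T' \<nu> N S' c1]
    by (intro exI[of _ "T + (if c0 then S else 0)"] exI[of _ "T' + (if c1 then S' else 0)"]) auto
qed

lemma paradox_B_state_C0_zero:
  fixes N :: nat and s t :: int
  assumes lam: "0 \<le> lam" "lam < pi/2" and "N > 0" "even N" "even s" "odd t"
    and delta_C: "cong2pi (delta lam C) (pi / real N * of_int s)"
    and beta_C: "cong2pi (beta lam C) (- (pi / real N * of_int t))"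
  shows "paradox (B_state lam) (std_angles N 0) (std_angles N 0) {0, C}"
proof (rule paradox_B_state_std_angles[where T = 0 and S = "int N" and T' = "- t" and S' = s])
  show "cis (beta lam 0) = cis ((of_int 0 + 0) * pi / N)"
    using lam by (simp add: beta_at_zero)
  show "cis (delta lam 0) = cis (of_int (int N) * pi / N)"
    using lam \<open>N > 0\<close> by (simp add: delta_at_zero)
  show "cis (beta lam C) = cis ((of_int (- t) + 0) * pi / N)"
    by (rule trans[OF cis_eq_if_cong2pi[OF beta_C] arg_cong[where f = cis]]) simp
  show "cis (delta lam C) = cis (of_int s * pi / N)"
    using cis_eq_if_cong2pi[OF delta_C] by (simp add: mult.commute)
qed (use assms in auto)

lemma std_angles_2_0: "std_angles 2 0 = {0, pi/2}"
  by (auto simp: std_angles_eq_image lessThan_nat_numeral)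

lemma GHZ_paradox: "paradox (B_state 0) {0, pi/2} {0, pi/2} {0, pi/2}"
proof -
  have "cos (pi/2 + pi) = 0" by (simp only: cos_periodic_pi cos_pi_half minus_zero)
  then have "beta 0 (pi/2) = - (pi/2)" "beta 0 (pi/2 + pi) = pi/2"
    by (simp_all add: beta_def)
  then have "cong2pi (beta 0 (pi/2)) (- (pi / real 2 * of_int 1))"
    and "cong2pi (delta 0 (pi/2)) (pi / real 2 * of_int 2)"
    by (auto simp: cong2pi_def delta_def intro!: exI[of _ 0])
  then have "paradox (B_state 0) (std_angles 2 0) (std_angles 2 0) {0, pi/2}"
    using paradox_B_state_C0_zero[where lam = 0 and N = 2 and s = 2 and t = 1 and C = "pi/2"] by simp
  then show ?thesis by (simp add: std_angles_2_0)
qed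

lemma paradox_B_state_half_shift:
  fixes N :: nat and s t' :: int
  assumes "N > 0" "even s"
    and delta0: "cong2pi (delta lam C0) (pi / real N * of_int s)"
    and delta1: "cong2pi (delta lam C1) (pi / real N * of_int s)"
    and beta0: "cong2pi (beta lam C0) (- (pi / real N * (of_int t' + 1/2)))"
    and beta1: "cong2pi (beta lam C1) (- (pi / real N * (of_int s - of_int t' - 1/2)))"
  shows "paradox (B_state lam) (std_angles N 0) (std_angles N (1/2)) {C0, C1}"
proof (rule paradox_B_state_std_angles[where T = "- t' - 1" and S = s and T' = "t' - s" and S' = s])
  show "cis (beta lam C0) = cis ((of_int (- t' - 1) + 1/2) * pi / N)"
    by (rule trans[OF cis_eq_if_cong2pi[OF beta0] arg_cong[where f = cis]])
      (use \<open>N > 0\<close> in \<open>simp add: field_simps\<close>)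
  show "cis (beta lam C1) = cis ((of_int (t' - s) + 1/2) * pi / N)"
    by (rule trans[OF cis_eq_if_cong2pi[OF beta1] arg_cong[where f = cis]])
      (use \<open>N > 0\<close> in \<open>simp add: field_simps\<close>)
  show "cis (delta lam C0) = cis (of_int s * pi / N)" "cis (delta lam C1) = cis (of_int s * pi / N)"
    using cis_eq_if_cong2pi[OF delta0] cis_eq_if_cong2pi[OF delta1] by (simp_all add: mult.commute)
qed (use assms in auto)

lemma paradox_B_state_fractional_shift:
  fixes N :: nat and s s' t' :: int and t :: real
  assumes "N > 0" "even s" "even s'" "odd t'"
    and delta0: "cong2pi (delta lam C0) (pi / real N * of_int s)"
    and delta1: "cong2pi (delta lam C1) (pi / real N * of_int s')"
    and beta10: "cong2pi (beta lam C1 - beta lam C0) (pi / real N * of_int t')"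
    and beta0: "cong2pi (beta lam C0) (- (pi / real N * t))"
  shows "paradox (B_state lam) (std_angles N 0) (std_angles N (of_int \<lceil>t\<rceil> - t)) {C0, C1}"
proof (rule paradox_B_state_std_angles
    [where T = "- \<lceil>t\<rceil>" and S = s and T' = "t' - \<lceil>t\<rceil>" and S' = s'])
  show "cis (beta lam C0) = cis ((of_int (- \<lceil>t\<rceil>) + (of_int \<lceil>t\<rceil> - t)) * pi / N)"
    by (rule trans[OF cis_eq_if_cong2pi[OF beta0] arg_cong[where f = cis]])
      (use \<open>N > 0\<close> in \<open>simp add: field_simps\<close>)
  have "cis (beta lam C1) = cis (beta lam C1 - beta lam C0) * cis (beta lam C0)"
    by (simp add: cis_mult)
  also have "\<dots> = cis ((of_int (t' - \<lceil>t\<rceil>) + (of_int \<lceil>t\<rceil> - t)) * pi / N)"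
    unfolding cis_eq_if_cong2pi[OF beta10] cis_eq_if_cong2pi[OF beta0] cis_mult
    by (rule arg_cong[where f = cis]) (use \<open>N > 0\<close> in \<open>simp add: field_simps\<close>)
  finally show "cis (beta lam C1)
      = cis ((of_int (t' - \<lceil>t\<rceil>) + (of_int \<lceil>t\<rceil> - t)) * pi / N)" .
  show "cis (delta lam C0) = cis (of_int s * pi / N)" "cis (delta lam C1) = cis (of_int s' * pi / N)"
    using cis_eq_if_cong2pi[OF delta0] cis_eq_if_cong2pi[OF delta1] by (simp_all add: mult.commute)
qed (use assms in auto)

lemma sin_eq_cos_if_balanced_phases:
  assumes "cis (beta lam C) = cis (- \<theta>)" "cis (delta lam C) = cis (2 * \<theta>)"
  shows "sin lam = cos \<theta>"
proof -
  define s where "s = complex_of_real (sin (lam/2))"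
  define c where "c = complex_of_real (cos (lam/2))"
  define w where "w = cis (- \<theta>)"
  define u where "u = cis C"
  have "cis (beta lam (C + pi)) = cnj w"
    using assms by (simp add: cis_beta_add_pi w_def cis_cnj cis_mult)
  then have "u * (w * c - s) = c - w * s" and "u * (s - cnj w * c) = c - cnj w * s"
    using assms cis_mult_beta_eq[of C lam] cis_mult_beta_eq[of "C + pi" lam]
    by (simp_all add: s_def c_def u_def w_def algebra_simps flip: minus_cis)
  moreover have "w * cnj w = 1" by (simp add: w_def cis_cnj cis_mult)
  moreover have "s * s + c * c = complex_of_real ((sin (lam/2))\<^sup>2 + (cos (lam/2))\<^sup>2)"
    by (simp only: s_def c_def power2_eq_square of_real_add of_real_mult)
  then have "s * s + c * c = 1" by simp
  \<comment> \<open>eliminate \<open>u\<close> from the phase equations at \<open>C\<close> and \<open>C + pi\<close>\<close>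
  ultimately have "4 * s * c = w + cnj w" by algebra
  then show ?thesis
    using sin_double[of "lam/2"] by (simp add: s_def c_def w_def complex_eq_iff mult_ac)
qed

lemma eq_pi_half_if_cis_beta:
  assumes lam: "0 \<le> lam" "lam < pi/2" and C: "0 \<le> C" "C < pi"
    and beta: "cis (beta lam C) = cis (lam - pi/2)"
  shows "C = pi/2"
proof -
  define s where "s = complex_of_real (sin (lam/2))"
  define c where "c = complex_of_real (cos (lam/2))"
  define w where "w = cis (lam - pi/2)"
  have w_eq: "w = Complex (sin lam) (- cos lam)"
    by (simp add: w_def cis.ctr cos_diff sin_diff)
  have "cos (lam/2) = cos lam * cos (lam/2) + sin lam * sin (lam/2)"
    and "sin (lam/2) = sin lam * cos (lam/2) - cos lam * sin (lam/2)"
    using cos_diff[of lam "lam/2"] sin_diff[of lam "lam/2"] by simp_all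
  then have "\<i> * (w * c - s) = c - w * s"
    by (simp add: w_eq s_def c_def complex_eq_iff)
  moreover have "w * c - s \<noteq> 0"
  proof -
    have "cos lam > 0" "cos (lam/2) > 0" using lam by (auto intro!: cos_gt_zero_pi)
    then show ?thesis by (simp add: w_eq s_def c_def complex_eq_iff)
  qed
  moreover have "cis C * (w * c - s) = c - w * s"
    using cis_mult_beta_eq[of C lam] beta by (simp add: s_def c_def w_def)
  ultimately have "cis C = \<i>" by (metis mult_cancel_right)
  then have "cos C = 0" by (simp add: complex_eq_iff)
  then show ?thesis using arccos_cos[of C] C by simp
qed

lemma balanced_phases_parameters:
  assumes lam: "0 \<le> lam" "lam < pi/2" and C: "0 \<le> C" "C < pi"
    and \<theta>: "0 < \<theta>" "\<theta> < pi/2"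
    and delta: "cong2pi (delta lam C) (2 * \<theta>)" and beta: "cong2pi (beta lam C) (- \<theta>)"
  shows "lam = pi/2 - \<theta> \<and> C = pi/2"
proof -
  have "sin lam = cos \<theta>"
    using cis_eq_if_cong2pi[OF beta] cis_eq_if_cong2pi[OF delta] by (rule sin_eq_cos_if_balanced_phases)
  then have "sin lam = sin (pi/2 - \<theta>)" using cos_sin_eq[of \<theta>] by simp
  then have "arcsin (sin lam) = arcsin (sin (pi/2 - \<theta>))" by simp
  then have lam_eq: "lam = pi/2 - \<theta>" using lam \<theta> by (simp add: arcsin_sin)
  then have "cis (beta lam C) = cis (lam - pi/2)"
    using cis_eq_if_cong2pi[OF beta] by simp
  with lam_eq show ?thesis using eq_pi_half_if_cis_beta[OF lam C] by simp
qed

theorem theorem20: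
  fixes N :: nat and lam C0 C1 :: real and M1 M2 :: "real set"
  assumes hN: "N \<ge> 2"
    and hlam: "0 \<le> lam" "lam < pi/2"
    and hC: "C0 \<in> {0..<pi}" "C1 \<in> {0..<pi}"
    and hM: "measurement_scenario M1 M2 {C0, C1}"
  shows
   "(((N = 2 \<and> lam = 0 \<and> M1 = {0, pi/2} \<and> M2 = {0, pi/2} \<and> {C0, C1} = {0, pi/2})
     \<or> (N > 2 \<and> even N \<and>
        (\<exists>s t :: int. even s \<and> odd t \<and> 1 \<le> s \<and> s < int N \<and> 1 \<le> t \<and> t \<le> s - 1 \<and>
           C0 = 0 \<and> cong2pi (delta lam C1) (pi / real N * of_int s) \<and>
           cong2pi (beta lam C1) (- (pi / real N * of_int t))) \<and>
        M1 = std_angles N 0 \<and> M2 = std_angles N 0)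
     \<or> ((\<exists>s t' :: int. even s \<and> 1 \<le> s \<and> s < int N \<and> 0 \<le> t' \<and> t' \<le> s div 2 - 1 \<and>
           C1 = pi - C0 \<and>
           cong2pi (delta lam C0) (pi / real N * of_int s) \<and>
           cong2pi (delta lam C1) (pi / real N * of_int s) \<and>
           cong2pi (beta lam C0) (- (pi / real N * (of_int t' + 1/2))) \<and>
           cong2pi (beta lam C1) (- (pi / real N * (of_int s - of_int t' - 1/2)))) \<and>
        M1 = std_angles N 0 \<and> M2 = std_angles N (1/2))
     \<or> (\<exists>s s' t' :: int. even s \<and> even s' \<and> odd t' \<and> 1 \<le> s \<and> s < s' \<and> s' < int N \<and>
           1 \<le> \<bar>t'\<bar> \<and> \<bar>t'\<bar> \<le> int N - 1 \<and>
           cong2pi (delta lam C0) (pi / real N * of_int s) \<and>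
           cong2pi (delta lam C1) (pi / real N * of_int s') \<and>
           cong2pi (beta lam C1 - beta lam C0) (pi / real N * of_int t') \<and>
           (\<exists>t :: real. 0 < t \<and> t < of_int s \<and> cong2pi (beta lam C0) (- (pi / real N * t)) \<and>
              M1 = std_angles N 0 \<and> M2 = std_angles N (of_int \<lceil>t\<rceil> - t))))
    \<longrightarrow> paradox (B_state lam) M1 M2 {C0, C1})
   \<and> (\<forall>s t :: int. N > 2 \<longrightarrow> even N \<longrightarrow> even s \<longrightarrow> odd t \<longrightarrow>
     1 \<le> s \<longrightarrow> s < int N \<longrightarrow> 1 \<le> t \<longrightarrow> t \<le> s - 1 \<longrightarrow>
     C0 = 0 \<longrightarrow> cong2pi (delta lam C1) (pi / real N * of_int s) \<longrightarrow>
     cong2pi (beta lam C1) (- (pi / real N * of_int t)) \<longrightarrow>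
     M1 = std_angles N 0 \<longrightarrow> M2 = std_angles N 0 \<longrightarrow> t = s div 2 \<longrightarrow>
     lam = pi/2 - pi / real N * of_int t \<and> C1 = pi/2)"
proof (rule conjI; intro impI allI; (elim disjE conjE exE)?)
  have "N > 0" using hN by simp
  show "paradox (B_state lam) M1 M2 {C0, C1}"
    if "lam = 0" "M1 = {0, pi/2}" "M2 = {0, pi/2}" "{C0, C1} = {0, pi/2}"
    using GHZ_paradox that by simp
  show "paradox (B_state lam) M1 M2 {C0, C1}"
    if "even N" "even s" "odd t" "C0 = 0"
      "cong2pi (delta lam C1) (pi / real N * of_int s)"
      "cong2pi (beta lam C1) (- (pi / real N * of_int t))"
      "M1 = std_angles N 0" "M2 = std_angles N 0" for s t
    using paradox_B_state_C0_zero[OF hlam \<open>N > 0\<close> that(1-3,5,6)] that(4,7,8) by simp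
  show "paradox (B_state lam) M1 M2 {C0, C1}"
    if "even s"
      "cong2pi (delta lam C0) (pi / real N * of_int s)"
      "cong2pi (delta lam C1) (pi / real N * of_int s)"
      "cong2pi (beta lam C0) (- (pi / real N * (of_int t' + 1/2)))"
      "cong2pi (beta lam C1) (- (pi / real N * (of_int s - of_int t' - 1/2)))"
      "M1 = std_angles N 0" "M2 = std_angles N (1/2)" for s t'
    using paradox_B_state_half_shift[OF \<open>N > 0\<close> that(1-5)] that(6,7) by simp
  show "paradox (B_state lam) M1 M2 {C0, C1}"
    if "even s" "even s'" "odd t'"
      "cong2pi (delta lam C0) (pi / real N * of_int s)"
      "cong2pi (delta lam C1) (pi / real N * of_int s')"
      "cong2pi (beta lam C1 - beta lam C0) (pi / real N * of_int t')"
      "cong2pi (beta lam C0) (- (pi / real N * t))"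
      "M1 = std_angles N 0" "M2 = std_angles N (of_int \<lceil>t\<rceil> - t)" for s s' t' t
    using paradox_B_state_fractional_shift[OF \<open>N > 0\<close> that(1-7)] that(8,9) by simp
  show "lam = pi/2 - pi / real N * of_int t \<and> C1 = pi/2"
    if "s < int N" "1 \<le> t" "t = s div 2" "even s"
      "cong2pi (delta lam C1) (pi / real N * of_int s)"
      "cong2pi (beta lam C1) (- (pi / real N * of_int t))" for s t
  proof (rule balanced_phases_parameters[OF hlam])
    have "s = 2 * t" using that(3,4) by simp
    then show "cong2pi (delta lam C1) (2 * (pi / real N * of_int t))"
      using that(5) by (simp add: mult_ac)
    have "real_of_int (2 * t) < real N" using that(1) \<open>s = 2 * t\<close> by linarith
    then show "pi / real N * of_int t < pi/2"
      using \<open>N > 0\<close> by (simp add: field_simps)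
  qed (use that hC \<open>N > 0\<close> in auto)
qed

end
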